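(* Let $\mu$ be a $(C,\gamma)$-absolutely decaying measure on $\mathbb{R}$, let $K=\operatorname{supp}\mu$, and let $0<\alpha\le\frac14\left(\frac{1}{3C}\right)^{1/\gamma}$. Then for every bi-Lipschitz map $\varphi:\mathbb{R}\to\mathbb{R}$, every integer $b\ge2$ and every $c,y\in\mathbb{T}$, the set $\varphi\big(\pi^{-1}(E(f_{b,c},y))\big)$ is $\alpha$-winning on $K$.
   Context: $\mathbb{T}=\mathbb{R}/\mathbb{Z}$, $\pi:\mathbb{R}\to\mathbb{T}$ the projection. For $b\in\mathbb{Z}_{\ge2}$ and $c\in\mathbb{T}$, $f_{b,c}:\mathbb{T}\to\mathbb{T}$ is $x\mapsto bx+c$. For $f:\mathbb{T}\to\mathbb{T}$ and $y\in\mathbb{T}$, $E(f,y)=\{x\in\mathbb{T}: y\notin\overline{\{f^n(x):n\in\mathbb{N}\}}\}$. $B(x,\rho)$ denotes the closed ball. A locally finite Borel measure $\mu$ on $\mathbb{R}$ is $(C,\gamma)$-absolutely decaying if there is $\rho_0>0$ such that for all $0<\rho\le\rho_0$, $x\in\operatorname{supp}\mu$, $y\in\mathbb{R}$, $\varepsilon>0$: $\mu(B(x,\rho)\cap B(y,\varepsilon\rho))<C\varepsilon^\gamma\mu(B(x,\rho))$. A map $\varphi$ is bi-Lipschitz if there is $L\ge1$ with $L^{-1}\le|\varphi(x)-\varphi(y)|/|x-y|\le L$ for all $x\ne y$. Schmidt's game on a complete metric space $(X,d)$ with parameters $0<\alpha,\beta<1$ and target $S\subset X$: on $X\times\mathbb{R}_+$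 write $(x_2,\rho_2)\le_s(x_1,\rho_1)$ if $\rho_2+d(x_1,x_2)\le\rho_1$. Bob picks $\omega_1=(x_1,\rho_1)$; then Alice and Bob alternately pick $\omega_k'=(x_k',\rho_k')\le_s\omega_k$ with $\rho_k'=\alpha\rho_k$ and $\omega_{k+1}\le_s\omega_k'$ with $\rho_{k+1}=\beta\rho_k'$. The nested closed balls intersect in a point $x_\infty$; Alice wins if $x_\infty\in S$. $S$ is $\alpha$-winning if for every $\beta\in(0,1)$ Alice has a strategy winning against all plays of Bob. For closed $K\subset\mathbb{R}$, $S\subset\mathbb{R}$ is $\alpha$-winning on $K$ if $S\cap K$ is $\alpha$-winning for the game played on $K$ with the induced metric. *)

theory Defs
  imports "HOL-Analysis.Analysis"
begin

text \<open>The circle T = R/Z is modelled by the unit circle in the complex plane,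
  via the topological group isomorphism x + Z |-> exp(2 pi i x).
  Under it, pi x = cis (2 pi x) and f_{b,c}(z) = c * z^b.\<close>

definition torus :: "complex set" where
  "torus = sphere 0 1"

definition proj_T :: "real \<Rightarrow> complex" where
  "proj_T x = cis (2 * pi * x)"

definition f_bc :: "nat \<Rightarrow> complex \<Rightarrow> complex \<Rightarrow> complex" where
  "f_bc b c z = c * z ^ b"

definition E_set :: "(complex \<Rightarrow> complex) \<Rightarrow> complex \<Rightarrow> complex set" where
  "E_set f y = {x \<in> torus. y \<notin> closure {(f ^^ n) x | n. True}}"

definition support :: "real measure \<Rightarrow> real set" where
  "support \<mu> = {x. \<forall>r>0. emeasure \<mu> (ball x r) > 0}"

definition locally_finite_borel :: "real measure \<Rightarrow> bool" where
  "locally_finite_borel \<mu> \<longleftrightarrow> sets \<mu> = sets borel \<and>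
     (\<forall>x. \<exists>r>0. emeasure \<mu> (ball x r) < \<infinity>)"

definition absolutely_decaying :: "real \<Rightarrow> real \<Rightarrow> real measure \<Rightarrow> bool" where
  "absolutely_decaying C \<gamma> \<mu> \<longleftrightarrow> locally_finite_borel \<mu> \<and>
     (\<exists>\<rho>0>0. \<forall>\<rho> x y \<epsilon>. 0 < \<rho> \<and> \<rho> \<le> \<rho>0 \<and> x \<in> support \<mu> \<and> \<epsilon> > 0 \<longrightarrow>
        emeasure \<mu> (cball x \<rho> \<inter> cball y (\<epsilon> * \<rho>))
          < ennreal (C * \<epsilon> powr \<gamma>) * emeasure \<mu> (cball x \<rho>))"

definition bi_lipschitz :: "(real \<Rightarrow> real) \<Rightarrow> bool" where
  "bi_lipschitz \<phi> \<longleftrightarrow> (\<exists>L\<ge>1. \<forall>x y. x \<noteq> y \<longrightarrow>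
     inverse L \<le> \<bar>\<phi> x - \<phi> y\<bar> / \<bar>x - y\<bar> \<and> \<bar>\<phi> x - \<phi> y\<bar> / \<bar>x - y\<bar> \<le> L)"

text \<open>Schmidt's game on K (induced metric). A move is (centre, radius).\<close>
definition le_s :: "real \<times> real \<Rightarrow> real \<times> real \<Rightarrow> bool" where
  "le_s w2 w1 \<longleftrightarrow> snd w2 + dist (fst w1) (fst w2) \<le> snd w1"

text \<open>Alice's strategy F maps the list of Bob's moves [w_1,...,w_k] to her move w_k'.
  Bob's moves are a sequence w :: nat => real * real (index 0 = w_1).\<close>
definition alice_move :: "((real \<times> real) list \<Rightarrow> real \<times> real) \<Rightarrow> (nat \<Rightarrow> real \<times> real) \<Rightarrow> nat \<Rightarrow> real \<times> real" where
  "alice_move F w k = F (map w [0..<Suc k])"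

definition bob_legal :: "real set \<Rightarrow> real \<Rightarrow> ((real \<times> real) list \<Rightarrow> real \<times> real) \<Rightarrow> (nat \<Rightarrow> real \<times> real) \<Rightarrow> nat \<Rightarrow> bool" where
  "bob_legal K \<beta> F w k \<longleftrightarrow> fst (w k) \<in> K \<and>
     (if k = 0 then snd (w 0) > 0
      else snd (w k) = \<beta> * snd (alice_move F w (k - 1)) \<and> le_s (w k) (alice_move F w (k - 1)))"

definition alice_legal :: "real set \<Rightarrow> real \<Rightarrow> ((real \<times> real) list \<Rightarrow> real \<times> real) \<Rightarrow> (nat \<Rightarrow> real \<times> real) \<Rightarrow> nat \<Rightarrow> bool" where
  "alice_legal K \<alpha> F w k \<longleftrightarrow> fst (alice_move F w k) \<in> K \<and>
     snd (alice_move F w k) = \<alpha> * snd (w k) \<and> le_s (alice_move F w k) (w k)"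

definition alpha_winning_on :: "real set \<Rightarrow> real \<Rightarrow> real set \<Rightarrow> bool" where
  "alpha_winning_on K \<alpha> S \<longleftrightarrow>
     (\<forall>\<beta>. 0 < \<beta> \<and> \<beta> < 1 \<longrightarrow>
       (\<exists>F. \<forall>w. (\<forall>n. (\<forall>k\<le>n. bob_legal K \<beta> F w k) \<longrightarrow> alice_legal K \<alpha> F w n) \<and>
                ((\<forall>k. bob_legal K \<beta> F w k) \<longrightarrow>
                   (\<Inter>k. cball (fst (w k)) (snd (w k)) \<inter> K) \<subseteq> S)))"

end

theory Submission
  imports Defs
begin

text \<open>With \<open>e = c' / (b - 1)\<close>, the \<open>n\<close>-th iterate of \<open>f_{b,c}\<close> lifts to \<open>t \<mapsto> b^n (t + e) - e\<close>, so
  \<open>\<pi> t \<in> E(f_{b,c}, y)\<close> as soon as \<open>b^n |t - q|\<close> is bounded below uniformly over the lifted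
  preimages \<open>q\<close> of \<open>y\<close> at all levels \<open>n\<close>. Alice forces this for the \<open>\<phi>\<close>-preimage of the outcome
  by handling one such \<open>q\<close> per move: when Bob's radius is comparable to \<open>b^-n\<close>, two preimages of
  nearby levels either coincide or are a fixed multiple of \<open>b^-n\<close> apart, so at most one of them
  is close to Bob's ball, and absolute decay of \<open>\<mu>\<close> lets Alice move her centre away from its image
  while staying in the support.\<close>

section \<open>Lifting the dynamics of \<open>f_bc\<close>\<close>

lemma torus_imp_cis:
  assumes "z \<in> torus"
  obtains u where "z = cis (2 * pi * u)"
proof
  have "cmod z = 1" using assms by (simp add: torus_def)
  then have "cis (Arg z) = z" using cis_Arg[of z] by (cases "z = 0") (auto simp: sgn_div_norm)
  then show "z = cis (2 * pi * (Arg z / (2 * pi)))" by simp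
qed

lemma norm_cis_diff: "cmod (cis a - cis b) = cmod (cis (a - b) - 1)"
proof -
  have "cis a - cis b = cis b * (cis (a - b) - 1)" by (simp add: cis_mult algebra_simps)
  then show ?thesis by (simp add: norm_mult)
qed

lemma norm_cis_minus_1_ge:
  fixes u \<delta> :: real
  assumes "0 < \<delta>" "\<delta> \<le> 1/2" and far: "\<And>m::int. \<delta> \<le> \<bar>u - of_int m\<bar>"
  shows "2 * (sin (pi * \<delta>))\<^sup>2 \<le> cmod (cis (2 * pi * u) - 1)"
proof -
  define v where "v = u - of_int \<lfloor>u + 1/2\<rfloor>"
  have v: "\<bar>v\<bar> \<le> 1/2" "\<delta> \<le> \<bar>v\<bar>"
    using far[of "\<lfloor>u + 1/2\<rfloor>"] unfolding v_def by linarith+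
  have "cis (2 * pi * u) = cis (2 * pi * v) * cis (2 * pi * of_int \<lfloor>u + 1/2\<rfloor>)"
    by (simp add: cis_mult v_def algebra_simps)
  then have cis_u: "cis (2 * pi * u) = cis (2 * pi * v)"
    by (simp add: cis_multiple_2pi)
  have "2 * (sin (pi * v))\<^sup>2 = \<bar>Re (cis (2 * pi * v) - 1)\<bar>"
    using cos_double_sin[of "pi * v"] by (simp add: mult.assoc)
  also have "\<dots> \<le> cmod (cis (2 * pi * v) - 1)" by (rule abs_Re_le_cmod)
  finally have "2 * (sin (pi * \<bar>v\<bar>))\<^sup>2 \<le> cmod (cis (2 * pi * v) - 1)"
    by (cases "v \<ge> 0") auto
  moreover have "sin (pi * \<delta>) \<le> sin (pi * \<bar>v\<bar>)"
  proof (rule sin_monotone_2pi_le)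
    have "0 \<le> pi * \<delta>" using assms(1) by simp
    then show "- (pi / 2) \<le> pi * \<delta>" using pi_gt_zero by linarith
    show "pi * \<delta> \<le> pi * \<bar>v\<bar>" using v by simp
    show "pi * \<bar>v\<bar> \<le> pi / 2" using v mult_left_mono[OF v(1), of pi] by simp
  qed
  moreover have "0 \<le> sin (pi * \<delta>)" by (rule sin_ge_zero) (use assms in auto)
  ultimately show ?thesis using cis_u by (smt (verit) power_mono)
qed

text \<open>Translating by \<open>e\<close> conjugates \<open>x \<mapsto> b x + c'\<close> to \<open>x \<mapsto> b x\<close>.\<close>
lemma funpow_f_bc_cis:
  assumes "b \<ge> 2" "c = cis (2 * pi * c')" "e = c' / (real b - 1)"
  shows "(f_bc b c ^^ n) (cis (2 * pi * t)) = cis (2 * pi * (real b ^ n * (t + e) - e))"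
proof (induction n)
  case (Suc n)
  have c': "c' = (real b - 1) * e" using assms by simp
  have "(f_bc b c ^^ Suc n) (cis (2 * pi * t)) = f_bc b c ((f_bc b c ^^ n) (cis (2 * pi * t)))"
    by simp
  also have "\<dots> = c * cis (2 * pi * (real b ^ n * (t + e) - e)) ^ b"
    by (simp only: Suc f_bc_def)
  also have "\<dots> = cis (2 * pi * c' + real b * (2 * pi * (real b ^ n * (t + e) - e)))"
    by (simp only: assms(2) Complex.DeMoivre cis_mult)
  also have "2 * pi * c' + real b * (2 * pi * (real b ^ n * (t + e) - e))
      = 2 * pi * (real b ^ Suc n * (t + e) - e)"
    unfolding c' by (simp add: algebra_simps)
  finally show ?case .
qed simp

definition lifted_preimage :: "nat \<Rightarrow> real \<Rightarrow> real \<Rightarrow> nat \<times> int \<Rightarrow> real" where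
  "lifted_preimage b a e nm = (a + of_int (snd nm)) / real b ^ fst nm - e"

lemma proj_T_in_E_set_f_bc:
  assumes b: "b \<ge> 2" and c: "c = cis (2 * pi * c')" and y: "y = cis (2 * pi * y')"
    and e: "e = c' / (real b - 1)" and "0 < \<delta>"
    and far: "\<And>nm. \<delta> \<le> real b ^ fst nm * \<bar>t - lifted_preimage b (y' + e) e nm\<bar>"
  shows "proj_T t \<in> E_set (f_bc b c) y"
proof -
  define r where "r = 2 * (sin (pi * min \<delta> (1/2)))\<^sup>2"
  have "0 < sin (pi * min \<delta> (1/2))" by (rule sin_gt_zero) (use \<open>0 < \<delta>\<close> in auto)
  then have "0 < r" by (simp add: r_def)
  have phase_far: "\<delta> \<le> \<bar>real b ^ n * (t + e) - e - y' - of_int m\<bar>" for n m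
  proof -
    have "real b ^ n * (t + e) - e - y' - of_int m = real b ^ n * (t - lifted_preimage b (y' + e) e (n, m))"
      using b by (simp add: lifted_preimage_def field_simps)
    then show ?thesis using far[of "(n, m)"] by (simp add: abs_mult)
  qed
  have orbit_far: "r \<le> dist ((f_bc b c ^^ n) (proj_T t)) y" for n
  proof -
    have "r \<le> cmod (cis (2 * pi * (real b ^ n * (t + e) - e - y')) - 1)"
      unfolding r_def
      by (rule norm_cis_minus_1_ge) (use \<open>0 < \<delta>\<close> in \<open>auto intro: min.coboundedI1 phase_far\<close>)
    also have "\<dots> = cmod (cis (2 * pi * (real b ^ n * (t + e) - e)) - cis (2 * pi * y'))"
      using norm_cis_diff[of "2 * pi * (real b ^ n * (t + e) - e)" "2 * pi * y'"]
      by (simp add: algebra_simps)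
    also have "\<dots> = dist ((f_bc b c ^^ n) (proj_T t)) y"
      by (simp only: proj_T_def funpow_f_bc_cis[OF b c e] y dist_norm)
    finally show ?thesis .
  qed
  then have "closure {(f_bc b c ^^ n) (proj_T t) | n. True} \<subseteq> - ball y r"
    by (intro closure_minimal) (auto simp: dist_commute leD)
  then show ?thesis
    using \<open>0 < r\<close> by (auto simp: E_set_def proj_T_def torus_def)
qed

section \<open>Preimages at comparable levels\<close>

lemma finite_uniformly_far_from_Ints:
  fixes S :: "real set"
  assumes "finite S"
  obtains \<eta> where "0 < \<eta>" "\<And>v m. v \<in> S \<Longrightarrow> v \<notin> \<int> \<Longrightarrow> \<eta> \<le> \<bar>v - of_int m\<bar>"
proof
  define g where "g v = min (frac v) (1 - frac v)" for v :: real
  have g_le: "g v \<le> \<bar>v - of_int m\<bar>" for v m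
  proof (cases "m \<le> \<lfloor>v\<rfloor>")
    case False
    then have "real_of_int (\<lfloor>v\<rfloor> + 1) \<le> of_int m" by simp
    then show ?thesis by (simp add: g_def frac_def)
  qed (simp add: g_def frac_def)
  define \<eta> where "\<eta> = Min (insert 1 (g ` (S - \<int>)))"
  show "0 < \<eta>"
    unfolding \<eta>_def using assms by (subst Min_gr_iff) (auto simp: g_def frac_lt_1)
  show "\<eta> \<le> \<bar>v - of_int m\<bar>" if "v \<in> S" "v \<notin> \<int>" for v m
  proof -
    have "\<eta> \<le> g v" unfolding \<eta>_def using assms that by (intro Min_le) auto
    then show ?thesis using g_le order_trans by blast
  qed
qed

lemma power_multiples_far_from_Ints:
  fixes a X :: real and b :: nat
  obtains \<eta> where "0 < \<eta>"
    "\<And>j k. real j < X \<Longrightarrow> (real b ^ j - 1) * a \<notin> \<int> \<Longrightarrow> \<eta> \<le> \<bar>(real b ^ j - 1) * a - of_int k\<bar>"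
proof -
  have "finite {j. real j < X}"
    by (rule finite_subset[of _ "{..nat \<lfloor>X\<rfloor>}"]) (auto intro: le_nat_floor less_imp_le)
  then obtain \<eta> where "0 < \<eta>" and \<eta>: "\<And>v m. v \<in> (\<lambda>j. (real b ^ j - 1) * a) ` {j. real j < X} \<Longrightarrow>
      v \<notin> \<int> \<Longrightarrow> \<eta> \<le> \<bar>v - of_int m\<bar>"
    using finite_uniformly_far_from_Ints[OF finite_imageI] by metis
  show thesis by (rule that[OF \<open>0 < \<eta>\<close>], rule \<eta>) auto
qed

text \<open>Two preimages at levels \<open>n \<le> n'\<close> differ by \<open>((b^j - 1) a + integer) / b^n'\<close>, \<open>j = n' - n\<close>:
  they coincide unless the distance of \<open>(b^j - 1) a\<close> to \<open>\<int>\<close> separates them.\<close>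
lemma b_adic_preimages_coincide:
  fixes a \<eta> :: real and b n n' :: nat and m m' :: int
  assumes "b \<ge> 1" "n \<le> n'"
    and far: "\<And>k::int. (real b ^ (n' - n) - 1) * a \<notin> \<int> \<Longrightarrow>
                \<eta> \<le> \<bar>(real b ^ (n' - n) - 1) * a - of_int k\<bar>"
    and close: "real b ^ n' * \<bar>(a + of_int m) / real b ^ n - (a + of_int m') / real b ^ n'\<bar> < min \<eta> 1"
  shows "(a + of_int m) / real b ^ n = (a + of_int m') / real b ^ n'"
proof -
  define j where "j = n' - n"
  define X where "X = real b ^ n' * ((a + of_int m) / real b ^ n - (a + of_int m') / real b ^ n')"
  have n': "n' = j + n" using assms(2) by (simp add: j_def)
  have X: "X = (real b ^ j - 1) * a - of_int (m' - int b ^ j * m)"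
    using assms(1) unfolding X_def n' by (simp add: power_add field_simps)
  have "\<bar>X\<bar> < min \<eta> 1"
    using close assms(1) by (simp add: X_def abs_mult)
  have "X = 0"
  proof (cases "(real b ^ j - 1) * a \<in> \<int>")
    case False
    then show ?thesis using far[of "m' - int b ^ j * m"] \<open>\<bar>X\<bar> < min \<eta> 1\<close> by (simp add: X j_def)
  next
    case True
    then obtain i where i: "(real b ^ j - 1) * a = of_int i" by (elim Ints_cases)
    define N where "N = i - (m' - int b ^ j * m)"
    have "X = of_int N" using i by (simp add: X N_def)
    moreover have "\<bar>X\<bar> < 1" using \<open>\<bar>X\<bar> < min \<eta> 1\<close> by simp
    ultimately have "\<bar>N\<bar> < 1" by (metis of_int_abs of_int_less_1_iff)
    with \<open>X = of_int N\<close> show ?thesis by simp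
  qed
  then show ?thesis using assms(1) by (simp add: X_def)
qed

definition at_level :: "nat \<Rightarrow> real \<Rightarrow> nat \<Rightarrow> real \<Rightarrow> bool" where
  "at_level b lam n r \<longleftrightarrow> 1 \<le> r * real b ^ n \<and> lam * r * real b ^ n < 1"

lemma exists_at_level:
  assumes "0 < lam" "lam < 1" "b \<ge> 1" "1 \<le> r"
  obtains k where "at_level b lam n (r * lam ^ k)"
proof -
  define P where "P k \<longleftrightarrow> lam * (r * lam ^ k) * real b ^ n < 1" for k
  obtain k0 where "lam ^ k0 < 1 / (lam * r * real b ^ n)"
    using real_arch_pow_inv[of "1 / (lam * r * real b ^ n)" lam] assms by auto
  then have "P k0" using assms by (simp add: P_def field_simps)
  define k where "k = (LEAST k. P k)"
  have "P k" unfolding k_def by (rule LeastI) fact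
  moreover have "1 \<le> r * lam ^ k * real b ^ n"
  proof (cases k)
    case 0
    then show ?thesis using assms mult_mono[of 1 r 1 "real b ^ n"] by simp
  next
    case (Suc k')
    then have "\<not> P k'" unfolding k_def by (metis lessI not_less_Least)
    then show ?thesis using Suc by (simp add: P_def algebra_simps)
  qed
  ultimately show ?thesis using that by (auto simp: at_level_def P_def algebra_simps)
qed

lemma at_level_gap:
  assumes "b \<ge> 2" "0 < lam" "at_level b lam n r" "at_level b lam n' r"
  shows "real (n' - n) < 1 / lam"
proof (cases "n \<le> n'")
  case True
  define j where "j = n' - n"
  have "lam * real b ^ j * (r * real b ^ n) < 1 * (r * real b ^ n)"
    using assms(3,4) True by (simp add: at_level_def j_def power_add[symmetric] algebra_simps)
  moreover have "0 < r * real b ^ n" using assms(3) by (auto simp: at_level_def)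
  ultimately have "lam * real b ^ j < 1"
    using mult_less_cancel_right_pos[of "r * real b ^ n" "lam * real b ^ j" 1] by simp
  moreover have "real j < real b ^ j"
  proof -
    have "j < b ^ j"
      using less_le_trans[OF less_exp power_mono[of 2 b j]] assms(1) by simp
    then show ?thesis by (metis of_nat_less_iff of_nat_power)
  qed
  ultimately have "lam * real j < 1"
    using assms(2) by (smt (verit) mult_strict_left_mono)
  then show ?thesis using assms(2) by (simp add: j_def field_simps)
qed (use assms(2) in simp)

lemma at_level_imp_mult_less:
  assumes "at_level b lam n r" "b \<ge> 1" "0 \<le> lam"
  shows "lam * r < 1"
proof -
  have "0 < r * real b ^ n" using assms(1) by (auto simp: at_level_def)
  then have "0 < r" using assms(2) by (simp add: zero_less_mult_iff)
  then have "lam * r * 1 \<le> lam * r * real b ^ n" using assms(2,3) by (intro mult_left_mono) auto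
  also have "\<dots> < 1" using assms(1) by (simp add: at_level_def)
  finally show ?thesis by simp
qed

lemma at_level_lower_bound:
  assumes "at_level b lam n (M * \<rho>)" "0 < M" "0 \<le> c" "c * \<rho> \<le> d"
  shows "c / M \<le> real b ^ n * d"
proof -
  have "c / M * 1 \<le> c / M * (M * \<rho> * real b ^ n)"
    using assms(1-3) by (intro mult_left_mono) (auto simp: at_level_def)
  also have "\<dots> = real b ^ n * (c * \<rho>)" using \<open>0 < M\<close> by (simp add: field_simps)
  also have "\<dots> \<le> real b ^ n * d" using assms(4) by (intro mult_left_mono) auto
  finally show ?thesis by simp
qed

lemma at_level_lifted_preimages_coincide:
  fixes a e \<eta> lam r :: real and b :: nat and nm nm' :: "nat \<times> int"
  assumes "b \<ge> 2" "0 < lam" "0 < \<eta>"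
    and far: "\<And>j k. real j < 1 / lam \<Longrightarrow> (real b ^ j - 1) * a \<notin> \<int> \<Longrightarrow>
                \<eta> \<le> \<bar>(real b ^ j - 1) * a - of_int k\<bar>"
    and "at_level b lam (fst nm) r" "at_level b lam (fst nm') r"
    and "\<bar>lifted_preimage b a e nm - lifted_preimage b a e nm'\<bar> \<le> lam * min \<eta> 1 * r"
  shows "lifted_preimage b a e nm = lifted_preimage b a e nm'"
proof -
  have ordered: "lifted_preimage b a e (n, m) = lifted_preimage b a e (n', m')"
    if "n \<le> n'" "at_level b lam n r" "at_level b lam n' r"
      and close: "\<bar>lifted_preimage b a e (n, m) - lifted_preimage b a e (n', m')\<bar> \<le> lam * min \<eta> 1 * r"
    for n n' m m'
  proof -
    have "(a + of_int m) / real b ^ n = (a + of_int m') / real b ^ n'"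
    proof (rule b_adic_preimages_coincide)
      show "b \<ge> 1" "n \<le> n'" using assms(1) that(1) by auto
      show "\<eta> \<le> \<bar>(real b ^ (n' - n) - 1) * a - of_int k\<bar>"
        if "(real b ^ (n' - n) - 1) * a \<notin> \<int>" for k
        using far[OF at_level_gap[OF assms(1,2) \<open>at_level b lam n r\<close> \<open>at_level b lam n' r\<close>] that] .
      have "real b ^ n' * \<bar>(a + of_int m) / real b ^ n - (a + of_int m') / real b ^ n'\<bar>
          \<le> (lam * r * real b ^ n') * min \<eta> 1"
        using mult_left_mono[OF close, of "real b ^ n'"] by (simp add: lifted_preimage_def algebra_simps)
      also have "\<dots> < 1 * min \<eta> 1"
        using \<open>at_level b lam n' r\<close> assms(3) by (intro mult_strict_right_mono) (auto simp: at_level_def)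
      finally show "real b ^ n' * \<bar>(a + of_int m) / real b ^ n - (a + of_int m') / real b ^ n'\<bar>
          < min \<eta> 1"
        by simp
    qed
    then show ?thesis by (simp add: lifted_preimage_def)
  qed
  obtain n m n' m' where "nm = (n, m)" "nm' = (n', m')" by fastforce
  then show ?thesis
    using ordered[of n n' m m'] ordered[of n' n m' m] assms(5-7)
    by (cases "n \<le> n'") (auto simp: abs_minus_commute)
qed

section \<open>Bi-Lipschitz maps of the line\<close>

lemma bi_lipschitzE:
  assumes "bi_lipschitz \<phi>"
  obtains L where "L \<ge> 1" "\<And>x y. \<bar>x - y\<bar> \<le> L * \<bar>\<phi> x - \<phi> y\<bar>"
    "\<And>x y. \<bar>\<phi> x - \<phi> y\<bar> \<le> L * \<bar>x - y\<bar>"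
proof -
  obtain L where L: "L \<ge> 1" and ratio: "\<And>x y. x \<noteq> y \<Longrightarrow>
     inverse L \<le> \<bar>\<phi> x - \<phi> y\<bar> / \<bar>x - y\<bar> \<and> \<bar>\<phi> x - \<phi> y\<bar> / \<bar>x - y\<bar> \<le> L"
    using assms unfolding bi_lipschitz_def by blast
  show thesis
  proof (rule that[OF L])
    show "\<bar>x - y\<bar> \<le> L * \<bar>\<phi> x - \<phi> y\<bar>" for x y
      using ratio[of x y] L by (cases "x = y") (auto simp: field_simps)
    show "\<bar>\<phi> x - \<phi> y\<bar> \<le> L * \<bar>x - y\<bar>" for x y
      using ratio[of x y] by (cases "x = y") (auto simp: field_simps)
  qed
qed

lemma bi_lipschitz_surj:
  fixes \<phi> :: "real \<Rightarrow> real"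
  assumes "L > 0" and lower: "\<And>x y. \<bar>x - y\<bar> \<le> L * \<bar>\<phi> x - \<phi> y\<bar>"
    and upper: "\<And>x y. \<bar>\<phi> x - \<phi> y\<bar> \<le> L * \<bar>x - y\<bar>"
  shows "surj \<phi>"
proof (rule surjI[of _ "\<lambda>v. SOME x. \<phi> x = v"], rule someI_ex)
  fix v
  have cont: "continuous_on S \<phi>" for S
    by (rule lipschitz_on_continuous_on[of L])
       (auto intro!: lipschitz_onI simp: dist_real_def upper less_imp_le[OF assms(1)])
  have inj: "inj_on \<phi> S" for S
    using lower by (intro inj_onI) (metis abs_0 diff_self mult_zero_right abs_le_zero_iff eq_iff_diff_eq_0)
  define P where "P = L * (\<bar>v - \<phi> 0\<bar> + 1)"
  have "P > 0" using assms(1) by (simp add: P_def)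
  have "P \<le> L * \<bar>\<phi> P - \<phi> 0\<bar>" "P \<le> L * \<bar>\<phi> (-P) - \<phi> 0\<bar>"
    using lower[of P 0] lower[of "-P" 0] \<open>P > 0\<close> by auto
  then have far: "\<bar>v - \<phi> 0\<bar> < \<bar>\<phi> P - \<phi> 0\<bar>" "\<bar>v - \<phi> 0\<bar> < \<bar>\<phi> (-P) - \<phi> 0\<bar>"
    using assms(1) by (auto simp: P_def)
  have "(\<phi> (-P) < \<phi> 0 \<and> \<phi> 0 < \<phi> P) \<or> (\<phi> P < \<phi> 0 \<and> \<phi> 0 < \<phi> (-P))"
    using continuous_inj_imp_mono[of "-P" 0 P \<phi>] \<open>P > 0\<close> cont inj by auto
  then show "\<exists>x. \<phi> x = v"
  proof
    assume "\<phi> (-P) < \<phi> 0 \<and> \<phi> 0 < \<phi> P"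
    then show ?thesis using IVT'[of \<phi> "-P" v P] far cont \<open>P > 0\<close> by force
  next
    assume "\<phi> P < \<phi> 0 \<and> \<phi> 0 < \<phi> (-P)"
    then show ?thesis using IVT2'[of \<phi> P v "-P"] far cont \<open>P > 0\<close> by force
  qed
qed

section \<open>Dodging strategies in Schmidt's game\<close>

definition alice_wins :: "real set \<Rightarrow> real \<Rightarrow> real \<Rightarrow> real set \<Rightarrow> bool" where
  "alice_wins K \<alpha> \<beta> S \<longleftrightarrow>
     (\<exists>F. \<forall>w. (\<forall>n. (\<forall>k\<le>n. bob_legal K \<beta> F w k) \<longrightarrow> alice_legal K \<alpha> F w n) \<and>
              ((\<forall>k. bob_legal K \<beta> F w k) \<longrightarrow> (\<Inter>k. cball (fst (w k)) (snd (w k)) \<inter> K) \<subseteq> S))"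

lemma alpha_winning_onI:
  assumes "\<And>\<beta>. 0 < \<beta> \<Longrightarrow> \<beta> < 1 \<Longrightarrow> alice_wins K \<alpha> \<beta> S"
  shows "alpha_winning_on K \<alpha> S"
  using assms unfolding alpha_winning_on_def alice_wins_def by blast

lemma alice_wins_mono: "alice_wins K \<alpha> \<beta> S \<Longrightarrow> S \<subseteq> T \<Longrightarrow> alice_wins K \<alpha> \<beta> T"
  unfolding alice_wins_def by blast

lemma le_s_cball_subset: "le_s w' w \<Longrightarrow> cball (fst w') (snd w') \<subseteq> cball (fst w) (snd w)"
  by (auto simp: le_s_def) (smt (verit) dist_commute dist_triangle)

lemma bob_legal_radius:
  assumes "\<And>k. snd (alice_move F w k) = \<alpha> * snd (w k)" and "\<forall>k\<le>n. bob_legal K \<beta> F w k"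
  shows "snd (w n) = snd (w 0) * (\<alpha> * \<beta>) ^ n"
  using assms(2)
proof (induction n)
  case (Suc n)
  then have "snd (w (Suc n)) = \<beta> * (\<alpha> * snd (w n))"
    by (simp add: bob_legal_def assms(1))
  then show ?case using Suc by simp
qed simp

definition can_dodge :: "real set \<Rightarrow> real \<Rightarrow> real \<Rightarrow> bool" where
  "can_dodge K \<alpha> r0 \<longleftrightarrow> (\<forall>x\<in>K. \<forall>\<rho> p. 0 < \<rho> \<and> \<rho> \<le> r0 \<longrightarrow>
     (\<exists>x'\<in>K. \<bar>x - x'\<bar> \<le> \<rho> / 2 \<and> 2 * \<alpha> * \<rho> < \<bar>x' - p\<bar>))"

lemma can_dodge_alpha_less:
  assumes "can_dodge K \<alpha> r0" "0 < r0" "x \<in> K"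
  shows "\<alpha> < 1 / 4"
proof -
  obtain x' where "\<bar>x - x'\<bar> \<le> r0 / 2" "2 * \<alpha> * r0 < \<bar>x' - x\<bar>"
    using assms unfolding can_dodge_def by blast
  then have "\<alpha> * r0 < 1 / 4 * r0" by (simp add: abs_minus_commute)
  then show ?thesis using assms(2) by simp
qed

text \<open>The target may depend on Bob's first radius, which fixes the scale of the game; Alice
  only dodges it at radii up to \<open>r0\<close>, where \<open>can_dodge\<close> applies.\<close>
definition dodging_strategy ::
    "real set \<Rightarrow> real \<Rightarrow> real \<Rightarrow> (real \<Rightarrow> real \<Rightarrow> real \<Rightarrow> real option) \<Rightarrow> (real \<times> real) list \<Rightarrow> real \<times> real"
  where
  "dodging_strategy K \<alpha> r0 target ws =
     (let (x, \<rho>) = last ws in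
      (case target (snd (hd ws)) x \<rho> of
         Some p \<Rightarrow> if \<rho> \<le> r0 then SOME x'. x' \<in> K \<and> \<bar>x - x'\<bar> \<le> \<rho> / 2 \<and> 2 * \<alpha> * \<rho> < \<bar>x' - p\<bar> else x
       | None \<Rightarrow> x,
       \<alpha> * \<rho>))"

lemma dodging_strategy_radius:
  "snd (alice_move (dodging_strategy K \<alpha> r0 target) w k) = \<alpha> * snd (w k)"
  by (simp add: alice_move_def dodging_strategy_def case_prod_beta)

lemma dodging_strategy_centre:
  fixes K :: "real set" and \<alpha> r0 :: real and w :: "nat \<Rightarrow> real \<times> real" and k :: nat
    and target :: "real \<Rightarrow> real \<Rightarrow> real \<Rightarrow> real option"
  defines "a \<equiv> fst (alice_move (dodging_strategy K \<alpha> r0 target) w k)"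
    and "x \<equiv> fst (w k)" and "\<rho> \<equiv> snd (w k)"
  assumes dodge: "can_dodge K \<alpha> r0" and "x \<in> K" "0 < \<rho>"
  shows "a \<in> K" "\<bar>x - a\<bar> \<le> \<rho> / 2"
    and "target (snd (w 0)) x \<rho> = Some p \<Longrightarrow> \<rho> \<le> r0 \<Longrightarrow> 2 * \<alpha> * \<rho> < \<bar>a - p\<bar>"
proof -
  have "hd (map w [0..<Suc k]) = w 0" "last (map w [0..<Suc k]) = w k"
    by (simp add: hd_map del: upt_Suc, simp)
  then have a: "a = (case target (snd (w 0)) x \<rho> of
      Some p \<Rightarrow> if \<rho> \<le> r0 then SOME x'. x' \<in> K \<and> \<bar>x - x'\<bar> \<le> \<rho> / 2 \<and> 2 * \<alpha> * \<rho> < \<bar>x' - p\<bar> else x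
    | None \<Rightarrow> x)"
    unfolding a_def x_def \<rho>_def alice_move_def dodging_strategy_def
    by (simp add: case_prod_beta del: upt_Suc)
  have "(SOME x'. x' \<in> K \<and> \<bar>x - x'\<bar> \<le> \<rho> / 2 \<and> 2 * \<alpha> * \<rho> < \<bar>x' - p\<bar>) \<in> K \<and>
    \<bar>x - (SOME x'. x' \<in> K \<and> \<bar>x - x'\<bar> \<le> \<rho> / 2 \<and> 2 * \<alpha> * \<rho> < \<bar>x' - p\<bar>)\<bar> \<le> \<rho> / 2 \<and>
    2 * \<alpha> * \<rho> < \<bar>(SOME x'. x' \<in> K \<and> \<bar>x - x'\<bar> \<le> \<rho> / 2 \<and> 2 * \<alpha> * \<rho> < \<bar>x' - p\<bar>) - p\<bar>"
    if "\<rho> \<le> r0" for p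
    by (rule someI_ex) (use dodge assms(5,6) that in \<open>force simp: can_dodge_def\<close>)
  then have "a \<in> K \<and> \<bar>x - a\<bar> \<le> \<rho> / 2 \<and>
      (target (snd (w 0)) x \<rho> = Some p \<longrightarrow> \<rho> \<le> r0 \<longrightarrow> 2 * \<alpha> * \<rho> < \<bar>a - p\<bar>)"
    using assms(5,6) by (auto simp: a split: option.split)
  then show "a \<in> K" "\<bar>x - a\<bar> \<le> \<rho> / 2"
    and "target (snd (w 0)) x \<rho> = Some p \<Longrightarrow> \<rho> \<le> r0 \<Longrightarrow> 2 * \<alpha> * \<rho> < \<bar>a - p\<bar>"
    by blast+
qed

lemma alice_wins_by_dodging:
  fixes target :: "real \<Rightarrow> real \<Rightarrow> real \<Rightarrow> real option"
  assumes dodge: "can_dodge K \<alpha> r0" and "0 < r0" "0 < \<alpha>" "0 < \<beta>"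
    and win: "\<And>\<rho>s x z. 0 < \<rho>s \<Longrightarrow> z \<in> K \<Longrightarrow> (\<And>k. \<bar>z - x k\<bar> \<le> \<rho>s * (\<alpha> * \<beta>) ^ k) \<Longrightarrow>
      (\<And>k p. target \<rho>s (x k) (\<rho>s * (\<alpha> * \<beta>) ^ k) = Some p \<Longrightarrow> \<rho>s * (\<alpha> * \<beta>) ^ k \<le> r0 \<Longrightarrow>
         \<alpha> * (\<rho>s * (\<alpha> * \<beta>) ^ k) < \<bar>z - p\<bar>) \<Longrightarrow> z \<in> S"
  shows "alice_wins K \<alpha> \<beta> S"
  unfolding alice_wins_def
proof (intro exI allI conjI)
  define F where "F = dodging_strategy K \<alpha> r0 target"
  note centre = dodging_strategy_centre[OF dodge, where target = target, folded F_def]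
  note radius = dodging_strategy_radius[of K \<alpha> r0 target, folded F_def]
  fix w :: "nat \<Rightarrow> real \<times> real"
  have bob_radius: "snd (w n) = snd (w 0) * (\<alpha> * \<beta>) ^ n" "0 < snd (w n)"
    if "\<forall>k\<le>n. bob_legal K \<beta> F w k" for n
    using bob_legal_radius[OF radius that] that assms(3,4) by (auto simp: bob_legal_def)
  show "(\<forall>k\<le>n. bob_legal K \<beta> F w k) \<longrightarrow> alice_legal K \<alpha> F w n" for n
  proof
    assume legal: "\<forall>k\<le>n. bob_legal K \<beta> F w k"
    have "fst (w n) \<in> K" using legal by (simp add: bob_legal_def)
    note centre = centre[of w n, OF this bob_radius(2)[OF legal]]
    have "\<alpha> < 1 / 4" using can_dodge_alpha_less[OF dodge \<open>0 < r0\<close> \<open>fst (w n) \<in> K\<close>] .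
    then have "\<alpha> * snd (w n) \<le> snd (w n) / 2" using bob_radius(2)[OF legal] by simp
    with centre(2) have "\<alpha> * snd (w n) + \<bar>fst (w n) - fst (alice_move F w n)\<bar> \<le> snd (w n)"
      by linarith
    with centre(1) show "alice_legal K \<alpha> F w n"
      unfolding alice_legal_def le_s_def dist_real_def radius by simp
  qed
  show "(\<forall>k. bob_legal K \<beta> F w k) \<longrightarrow> (\<Inter>k. cball (fst (w k)) (snd (w k)) \<inter> K) \<subseteq> S"
  proof (intro impI subsetI)
    fix z assume legal: "\<forall>k. bob_legal K \<beta> F w k" and z: "z \<in> (\<Inter>k. cball (fst (w k)) (snd (w k)) \<inter> K)"
    have \<rho>: "snd (w k) = snd (w 0) * (\<alpha> * \<beta>) ^ k" "0 < snd (w k)" for k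
      using bob_radius[of k] legal by simp_all
    show "z \<in> S"
    proof (rule win)
      show "0 < snd (w 0)" using \<rho>(2)[of 0] .
      show "z \<in> K" using z by blast
      show "\<bar>z - fst (w k)\<bar> \<le> snd (w 0) * (\<alpha> * \<beta>) ^ k" for k
      proof -
        have "z \<in> cball (fst (w k)) (snd (w k))" using z by blast
        then show ?thesis using \<rho>(1)[of k] by (simp add: dist_real_def abs_minus_commute)
      qed
      fix k p
      assume "target (snd (w 0)) (fst (w k)) (snd (w 0) * (\<alpha> * \<beta>) ^ k) = Some p"
        and "snd (w 0) * (\<alpha> * \<beta>) ^ k \<le> r0"
      moreover have "fst (w k) \<in> K" using legal by (simp add: bob_legal_def)
      ultimately have "2 * \<alpha> * snd (w k) < \<bar>fst (alice_move F w k) - p\<bar>"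
        using centre(3)[of w k p] \<rho>[of k] by simp
      moreover have "le_s (w (Suc k)) (alice_move F w k)"
        using legal[rule_format, of "Suc k"] by (simp add: bob_legal_def)
      then have "z \<in> cball (fst (alice_move F w k)) (snd (alice_move F w k))"
        using le_s_cball_subset z by blast
      ultimately show "\<alpha> * (snd (w 0) * (\<alpha> * \<beta>) ^ k) < \<bar>z - p\<bar>"
        using \<rho>[of k] by (simp add: radius dist_real_def abs_minus_commute)
    qed
  qed
qed

section \<open>Absolutely decaying measures\<close>

lemma emeasure_disjoint_support:
  assumes sets: "sets \<mu> = sets borel" and "A \<in> sets borel" and "A \<inter> support \<mu> = {}"
  shows "emeasure \<mu> A = 0"
proof -
  define I where "I = {(q, r). q \<in> \<rat> \<and> r \<in> \<rat> \<and> emeasure \<mu> (ball q r) = 0}"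
  have "countable I"
    by (rule countable_subset[of _ "\<rat> \<times> \<rat>"]) (auto simp: I_def countable_rat)
  then have null: "(\<Union>p\<in>I. ball (fst p) (snd p)) \<in> null_sets \<mu>"
    by (rule null_sets_UN') (use sets in \<open>auto simp: I_def null_sets_def\<close>)
  have "A \<subseteq> (\<Union>p\<in>I. ball (fst p) (snd p))"
  proof
    fix x assume "x \<in> A"
    then obtain r where "r > 0" and r: "emeasure \<mu> (ball x r) = 0"
      using assms(3) by (auto simp: support_def zero_less_iff_neq_zero)
    obtain q where q: "q \<in> \<rat>" "x < q" "q < x + r/4" using Rats_dense_in_real[of x "x + r/4"] \<open>r > 0\<close> by auto
    obtain s where s: "s \<in> \<rat>" "r/4 < s" "s < r/2" using Rats_dense_in_real[of "r/4" "r/2"] \<open>r > 0\<close> by auto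
    have "ball q s \<subseteq> ball x r" using q s by (auto simp: dist_real_def)
    then have "emeasure \<mu> (ball q s) = 0"
      using r emeasure_mono[of "ball q s" "ball x r" \<mu>] sets by simp
    moreover have "x \<in> ball q s" using q s by (simp add: dist_real_def)
    ultimately show "x \<in> (\<Union>p\<in>I. ball (fst p) (snd p))" using q s by (force simp: I_def)
  qed
  then show ?thesis using null assms(2) sets by (metis null_sets_subset null_setsD1)
qed

lemma absolutely_decaying_can_dodge:
  assumes decaying: "absolutely_decaying C \<gamma> \<mu>" and "0 < \<alpha>" and "C * (4 * \<alpha>) powr \<gamma> \<le> 1"
  obtains r0 where "0 < r0" "can_dodge (support \<mu>) \<alpha> r0"
proof -
  obtain r0 where "0 < r0" and decay: "\<And>\<rho> x p \<epsilon>. 0 < \<rho> \<Longrightarrow> \<rho> \<le> r0 \<Longrightarrow> x \<in> support \<mu> \<Longrightarrow> \<epsilon> > 0 \<Longrightarrow>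
      emeasure \<mu> (cball x \<rho> \<inter> cball p (\<epsilon> * \<rho>)) < ennreal (C * \<epsilon> powr \<gamma>) * emeasure \<mu> (cball x \<rho>)"
    using decaying unfolding absolutely_decaying_def by blast
  have sets: "sets \<mu> = sets borel"
    using decaying by (simp add: absolutely_decaying_def locally_finite_borel_def)
  have "\<exists>x'\<in>support \<mu>. \<bar>x - x'\<bar> \<le> \<rho> / 2 \<and> 2 * \<alpha> * \<rho> < \<bar>x' - p\<bar>"
    if x: "x \<in> support \<mu>" and "0 < \<rho>" "\<rho> \<le> 2 * r0" for x \<rho> p
  proof (rule ccontr)
    define B where "B = cball x (\<rho> / 2)"
    define Z where "Z = cball p (4 * \<alpha> * (\<rho> / 2))"
    assume "\<not> ?thesis"
    then have "(B - Z) \<inter> support \<mu> = {}"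
      by (auto simp: B_def Z_def dist_real_def abs_minus_commute not_le)
    then have "emeasure \<mu> (B - Z) = 0"
      by (intro emeasure_disjoint_support[OF sets]) (auto simp: B_def Z_def)
    moreover have "emeasure \<mu> B \<le> emeasure \<mu> (B \<inter> Z) + emeasure \<mu> (B - Z)"
      using emeasure_subadditive[of "B \<inter> Z" \<mu> "B - Z"] sets by (simp add: B_def Z_def Int_Diff_Un)
    ultimately have "emeasure \<mu> B \<le> emeasure \<mu> (B \<inter> Z)" by simp
    also have "\<dots> < ennreal (C * (4 * \<alpha>) powr \<gamma>) * emeasure \<mu> B"
      unfolding B_def Z_def using decay[of "\<rho> / 2" x "4 * \<alpha>" p] x \<open>0 < \<rho>\<close> \<open>\<rho> \<le> 2 * r0\<close> \<open>0 < \<alpha>\<close>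
      by simp
    also have "\<dots> \<le> emeasure \<mu> B"
      using mult_right_mono[of "ennreal (C * (4 * \<alpha>) powr \<gamma>)" 1 "emeasure \<mu> B"] assms(3) by simp
    finally show False by simp
  qed
  then show thesis using that[of r0] \<open>0 < r0\<close> by (force simp: can_dodge_def)
qed

section \<open>Winning sets\<close>

lemma dodged_point_lower_bound:
  fixes \<psi> :: "real \<Rightarrow> real"
  assumes "1 \<le> L" "\<alpha> \<le> 1" "0 < \<rho>"
    and "\<bar>\<psi> z - \<psi> x\<bar> \<le> L * \<rho>"
    and dodged: "\<bar>q - \<psi> x\<bar> \<le> 2 * L * \<rho> \<Longrightarrow> \<alpha> * \<rho> < L * \<bar>\<psi> z - q\<bar>"
  shows "\<alpha> / L * \<rho> \<le> \<bar>\<psi> z - q\<bar>"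
proof (cases "\<bar>q - \<psi> x\<bar> \<le> 2 * L * \<rho>")
  case True
  then show ?thesis using dodged assms(1) by (simp add: pos_divide_le_eq mult.commute)
next
  case False
  have "\<alpha> / L * \<rho> \<le> \<rho>"
    using assms(1-3) mult_right_mono[OF assms(2), of \<rho>] by (simp add: pos_divide_le_eq)
  also have "\<rho> \<le> L * \<rho>" using assms(1,3) by simp
  finally show ?thesis using False assms(4) by linarith
qed

text \<open>Alice plays in the image of \<open>\<phi>\<close>, pulling back by \<open>\<psi>\<close>. At a radius \<open>\<rho>\<close> of level \<open>n\<close>
  at most one lifted preimage lies within \<open>2 L \<rho>\<close> of the pulled back centre, and Alice dodges
  its image. The three lower bounds in \<open>M\<close> give, respectively, this uniqueness, \<open>\<rho> \<le> r0\<close>, and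
  a level for every \<open>n\<close> from Bob's first radius on.\<close>
lemma alice_wins_avoiding_lifted_preimages:
  fixes \<phi> \<psi> :: "real \<Rightarrow> real"
  assumes dodge: "can_dodge K \<alpha> r0" and "0 < r0" "0 < \<alpha>" "0 < \<beta>" "\<beta> < 1"
    and b: "b \<ge> 2" and "1 \<le> L" and upper: "\<And>x y. \<bar>\<phi> x - \<phi> y\<bar> \<le> L * \<bar>x - y\<bar>"
    and \<psi>_lipschitz: "\<And>u v. \<bar>\<psi> u - \<psi> v\<bar> \<le> L * \<bar>u - v\<bar>" and \<phi>_\<psi>: "\<And>u. \<phi> (\<psi> u) = u"
  shows "alice_wins K \<alpha> \<beta> {z. \<exists>\<delta>>0. \<forall>nm. \<delta> \<le> real b ^ fst nm * \<bar>\<psi> z - lifted_preimage b a e nm\<bar>}"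
proof -
  define lam where "lam = \<alpha> * \<beta>"
  define P where "P = lifted_preimage b a e"
  have "0 < lam" using \<open>0 < \<alpha>\<close> \<open>0 < \<beta>\<close> by (simp add: lam_def)
  obtain \<eta> where "0 < \<eta>" and far: "\<And>j k. real j < 1 / lam \<Longrightarrow> (real b ^ j - 1) * a \<notin> \<int> \<Longrightarrow>
      \<eta> \<le> \<bar>(real b ^ j - 1) * a - of_int k\<bar>"
    using power_multiples_far_from_Ints by metis
  define M where "M \<rho>s = max (4 * L / (lam * min \<eta> 1)) (max (1 / (lam * r0)) (1 / \<rho>s))" for \<rho>s
  define near where "near \<rho>s x \<rho> nm \<longleftrightarrow>
    at_level b lam (fst nm) (M \<rho>s * \<rho>) \<and> \<bar>P nm - \<psi> x\<bar> \<le> 2 * L * \<rho>" for \<rho>s x \<rho> nm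
  define target where "target \<rho>s x \<rho> =
    (if \<exists>nm. near \<rho>s x \<rho> nm then Some (\<phi> (P (SOME nm. near \<rho>s x \<rho> nm))) else None)" for \<rho>s x \<rho>
  have near_unique: "P nm = P nm'" if "near \<rho>s x \<rho> nm" "near \<rho>s x \<rho> nm'" for \<rho>s x \<rho> nm nm'
  proof -
    have "4 * L / (lam * min \<eta> 1) \<le> M \<rho>s" by (simp add: M_def)
    then have "4 * L \<le> lam * min \<eta> 1 * M \<rho>s"
      using \<open>0 < lam\<close> \<open>0 < \<eta>\<close> by (simp add: pos_divide_le_eq mult.commute)
    moreover have "0 \<le> 2 * L * \<rho>" using that(1) unfolding near_def by (meson abs_ge_zero order_trans)
    then have "0 \<le> \<rho>" using \<open>1 \<le> L\<close> by (simp add: zero_le_mult_iff)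
    ultimately have "4 * L * \<rho> \<le> lam * min \<eta> 1 * M \<rho>s * \<rho>" by (rule mult_right_mono)
    moreover have "\<bar>P nm - P nm'\<bar> \<le> 4 * L * \<rho>" using that unfolding near_def by linarith
    ultimately have "\<bar>P nm - P nm'\<bar> \<le> lam * min \<eta> 1 * (M \<rho>s * \<rho>)" by (simp add: mult.assoc)
    with that show ?thesis
      unfolding near_def P_def by (blast intro: at_level_lifted_preimages_coincide[OF b \<open>0 < lam\<close> \<open>0 < \<eta>\<close> far])
  qed
  show ?thesis
  proof (rule alice_wins_by_dodging[OF dodge \<open>0 < r0\<close> \<open>0 < \<alpha>\<close> \<open>0 < \<beta>\<close>, where target = target])
    fix \<rho>s x z
    assume "0 < \<rho>s" and "z \<in> K" and ball: "\<And>k. \<bar>z - x k\<bar> \<le> \<rho>s * (\<alpha> * \<beta>) ^ k"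
      and avoided: "\<And>k p. target \<rho>s (x k) (\<rho>s * (\<alpha> * \<beta>) ^ k) = Some p \<Longrightarrow>
                     \<rho>s * (\<alpha> * \<beta>) ^ k \<le> r0 \<Longrightarrow> \<alpha> * (\<rho>s * (\<alpha> * \<beta>) ^ k) < \<bar>z - p\<bar>"
    have "\<alpha> < 1 / 4" by (rule can_dodge_alpha_less[OF dodge \<open>0 < r0\<close> \<open>z \<in> K\<close>])
    then have "\<alpha> * \<beta> < 1 * 1" using \<open>0 < \<beta>\<close> \<open>\<beta> < 1\<close> by (intro mult_strict_mono) auto
    then have "lam < 1" by (simp add: lam_def)
    have "1 / \<rho>s \<le> M \<rho>s" "1 / (lam * r0) \<le> M \<rho>s" by (simp_all add: M_def)
    then have "1 \<le> M \<rho>s * \<rho>s" "1 \<le> M \<rho>s * (lam * r0)" "0 < M \<rho>s"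
      using \<open>0 < \<rho>s\<close> \<open>0 < lam\<close> \<open>0 < r0\<close>
      by (simp_all add: pos_divide_le_eq less_le_trans[OF _ \<open>1 / \<rho>s \<le> M \<rho>s\<close>])
    have "\<alpha> / L / M \<rho>s \<le> real b ^ fst nm * \<bar>\<psi> z - P nm\<bar>" for nm
    proof -
      obtain k where "at_level b lam (fst nm) (M \<rho>s * \<rho>s * lam ^ k)"
        using exists_at_level[OF \<open>0 < lam\<close> \<open>lam < 1\<close> _ \<open>1 \<le> M \<rho>s * \<rho>s\<close>, of b "fst nm"] b by auto
      define \<rho> where "\<rho> = \<rho>s * lam ^ k"
      have level: "at_level b lam (fst nm) (M \<rho>s * \<rho>)"
        using \<open>at_level b lam (fst nm) (M \<rho>s * \<rho>s * lam ^ k)\<close> by (simp add: \<rho>_def mult.assoc)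
      have "0 < \<rho>" using \<open>0 < \<rho>s\<close> \<open>0 < lam\<close> by (simp add: \<rho>_def)
      have "lam * (M \<rho>s * \<rho>) < 1" using at_level_imp_mult_less[OF level] b \<open>0 < lam\<close> by simp
      also have "1 \<le> lam * (M \<rho>s * r0)" using \<open>1 \<le> M \<rho>s * (lam * r0)\<close> by (simp add: ac_simps)
      finally have "\<rho> \<le> r0" using \<open>0 < lam\<close> \<open>0 < M \<rho>s\<close> by simp
      have "\<alpha> / L * \<rho> \<le> \<bar>\<psi> z - P nm\<bar>"
      proof (rule dodged_point_lower_bound[OF \<open>1 \<le> L\<close> _ \<open>0 < \<rho>\<close>])
        show "\<alpha> \<le> 1" using \<open>\<alpha> < 1 / 4\<close> by simp
        have "L * \<bar>z - x k\<bar> \<le> L * \<rho>" using ball[of k] \<open>1 \<le> L\<close> by (simp add: \<rho>_def lam_def)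
        then show "\<bar>\<psi> z - \<psi> (x k)\<bar> \<le> L * \<rho>" by (rule order_trans[OF \<psi>_lipschitz])
        assume "\<bar>P nm - \<psi> (x k)\<bar> \<le> 2 * L * \<rho>"
        with level have "near \<rho>s (x k) \<rho> nm" by (simp add: near_def)
        then have "P (SOME nm. near \<rho>s (x k) \<rho> nm) = P nm" by (intro near_unique[OF someI])
        moreover have "\<exists>nm. near \<rho>s (x k) \<rho> nm" using \<open>near \<rho>s (x k) \<rho> nm\<close> by blast
        ultimately have "target \<rho>s (x k) \<rho> = Some (\<phi> (P nm))" by (simp only: target_def if_True)
        then have "\<alpha> * \<rho> < \<bar>z - \<phi> (P nm)\<bar>"
          using avoided[of k] \<open>\<rho> \<le> r0\<close> by (simp add: \<rho>_def lam_def)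
        also have "\<dots> \<le> L * \<bar>\<psi> z - P nm\<bar>" using upper[of "\<psi> z" "P nm"] by (simp add: \<phi>_\<psi>)
        finally show "\<alpha> * \<rho> < L * \<bar>\<psi> z - P nm\<bar>" .
      qed
      moreover have "0 \<le> \<alpha> / L" using \<open>0 < \<alpha>\<close> \<open>1 \<le> L\<close> by simp
      ultimately show ?thesis by (intro at_level_lower_bound[OF level \<open>0 < M \<rho>s\<close>])
    qed
    moreover have "0 < \<alpha> / L / M \<rho>s" using \<open>0 < \<alpha>\<close> \<open>1 \<le> L\<close> \<open>0 < M \<rho>s\<close> by simp
    ultimately show "z \<in> {z. \<exists>\<delta>>0. \<forall>nm. \<delta> \<le> real b ^ fst nm * \<bar>\<psi> z - lifted_preimage b a e nm\<bar>}"
      unfolding P_def by blast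
  qed
qed

lemma alpha_winning_on_bi_lipschitz_image_E:
  assumes "can_dodge K \<alpha> r0" "0 < r0" "0 < \<alpha>"
    and "bi_lipschitz \<phi>" and b: "b \<ge> 2" and "c \<in> torus" "y \<in> torus"
  shows "alpha_winning_on K \<alpha> (\<phi> ` (proj_T -` E_set (f_bc b c) y))"
proof (rule alpha_winning_onI)
  fix \<beta> :: real assume "0 < \<beta>" "\<beta> < 1"
  obtain L where "1 \<le> L" and lower: "\<And>x y. \<bar>x - y\<bar> \<le> L * \<bar>\<phi> x - \<phi> y\<bar>"
    and upper: "\<And>x y. \<bar>\<phi> x - \<phi> y\<bar> \<le> L * \<bar>x - y\<bar>"
    using bi_lipschitzE[OF \<open>bi_lipschitz \<phi>\<close>] by blast
  have "surj \<phi>" using bi_lipschitz_surj[OF _ lower upper] \<open>1 \<le> L\<close> by simp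
  define \<psi> where "\<psi> = inv \<phi>"
  have \<phi>_\<psi>: "\<phi> (\<psi> u) = u" for u using \<open>surj \<phi>\<close> by (simp add: \<psi>_def surj_f_inv_f)
  have \<psi>_lipschitz: "\<bar>\<psi> u - \<psi> v\<bar> \<le> L * \<bar>u - v\<bar>" for u v
    using lower[of "\<psi> u" "\<psi> v"] by (simp add: \<phi>_\<psi>)
  obtain c' y' where c: "c = cis (2 * pi * c')" and y: "y = cis (2 * pi * y')"
    using torus_imp_cis \<open>c \<in> torus\<close> \<open>y \<in> torus\<close> by metis
  define e where "e = c' / (real b - 1)"
  have "z \<in> \<phi> ` (proj_T -` E_set (f_bc b c) y)"
    if "0 < \<delta>" "\<forall>nm. \<delta> \<le> real b ^ fst nm * \<bar>\<psi> z - lifted_preimage b (y' + e) e nm\<bar>" for z \<delta>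
  proof -
    have "proj_T (\<psi> z) \<in> E_set (f_bc b c) y"
      by (rule proj_T_in_E_set_f_bc[OF b c y e_def that(1)]) (use that(2) in blast)
    then show ?thesis using \<phi>_\<psi>[of z] by (metis image_eqI vimageI)
  qed
  then have "{z. \<exists>\<delta>>0. \<forall>nm. \<delta> \<le> real b ^ fst nm * \<bar>\<psi> z - lifted_preimage b (y' + e) e nm\<bar>}
      \<subseteq> \<phi> ` (proj_T -` E_set (f_bc b c) y)"
    by blast
  then show "alice_wins K \<alpha> \<beta> (\<phi> ` (proj_T -` E_set (f_bc b c) y))"
    using alice_wins_avoiding_lifted_preimages[OF assms(1-3) \<open>0 < \<beta>\<close> \<open>\<beta> < 1\<close> b \<open>1 \<le> L\<close>
        upper \<psi>_lipschitz \<phi>_\<psi>]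
    by (rule alice_wins_mono[rotated])
qed

theorem corollary4p3:
  fixes \<mu> :: "real measure" and C \<gamma> \<alpha> :: real
  assumes "C > 0" and "\<gamma> > 0"
    and "absolutely_decaying C \<gamma> \<mu>"
    and "0 < \<alpha>" and "\<alpha> \<le> (1/4) * (1 / (3 * C)) powr (1 / \<gamma>)"
  shows "\<forall>\<phi> (b::nat) c y. bi_lipschitz \<phi> \<and> b \<ge> 2 \<and> c \<in> torus \<and> y \<in> torus \<longrightarrow>
           alpha_winning_on (support \<mu>) \<alpha> (\<phi> ` (proj_T -` E_set (f_bc b c) y))"
proof -
  have "(4 * \<alpha>) powr \<gamma> \<le> ((1 / (3 * C)) powr (1 / \<gamma>)) powr \<gamma>"
    using assms by (intro powr_mono2) auto
  also have "\<dots> = 1 / (3 * C)" using assms by (simp add: powr_powr)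
  finally have "C * (4 * \<alpha>) powr \<gamma> \<le> 1"
    using \<open>C > 0\<close> by (simp add: field_simps)
  then obtain r0 where "0 < r0" "can_dodge (support \<mu>) \<alpha> r0"
    using absolutely_decaying_can_dodge[OF assms(3,4)] by blast
  then show ?thesis
    using alpha_winning_on_bi_lipschitz_image_E \<open>0 < \<alpha>\<close> by blast
qed

end
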